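(* Let $m\in\{2,3\}$, and let $S\ni h$ be a polarized lattice with $h^2\ge4$ if $m=2$ and $h^2=8$ if $m=3$, which is $(m-1)$-admissible. Let $\Delta$ be a Weyl chamber for $\operatorname{rt}(S,h)$, $\bar P$ the corresponding closed fundamental polyhedron, and $w\in\bar P$ an $m$-isotropic vector. Then: (1) if $h^2=4$ and $m=2$, there are at most two $2$-isotropic vectors in $\bar P$, and if there are two, $w\ne\bar w$, then $w+\bar w=h$; (2) otherwise, $w$ is the unique $m$-isotropic vector in $\bar P$. Furthermore, $l\cdot w\in\{0,1\}$ for each line $l\in\operatorname{Fn}_\Delta(S,h)$ and $e\cdot w\in\{0,1\}$ for each exceptional divisor $e\in\mathfrak{b}(\Delta)$.
   Context: All lattices even; $(S,h)$ polarized means $S$ hyperbolic, $h^2>0$. $\operatorname{root}_n(S,h)=\{r: r^2=-2,\ r\cdot h=n\}$, $\operatorname{rt}(S,h)$ spanned by $\operatorname{root}_0(S,h)$. A Weyl chamber $\Delta$ has positive roots $P_\Delta$ and simple roots $\mathfrak{b}(\Delta)$ (exceptional divisors). $\bar P=\{v\in S\otimes\mathbb{R}: v^2\ge0,\ v\cdot h\ge0,\ v\cdot r\ge0 \text{ for all } r\in P_\Delta \text{ and all roots } r \text{ with } r\cdot h>0\}$. Lines: $\operatorname{Fn}_\Delta(S,h)=\{l\in\operatorname{root}_1(S,h): l\cdot e\ge0\ \forall e\in\mathfrak{b}(\Delta)\}$. $w$ is $m$-isotropic if $w^2=0$, $w\cdot h=m$. $1$-admissible: no $1$-isotropic vector;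 $2$-admissible: $h^2\ge4$ and no $1$- or $2$-isotropic vector. *)

theory Defs
  imports "HOL-Analysis.Analysis"
begin

text \<open>A lattice of rank CARD('n) is modelled as int^'n with Gram matrix G.\<close>

definition bi :: "int^'n^'n \<Rightarrow> int^'n \<Rightarrow> int^'n \<Rightarrow> int" where
  "bi G x y = (\<Sum>i\<in>UNIV. \<Sum>j\<in>UNIV. x$i * G$i$j * y$j)"

definition br :: "int^'n^'n \<Rightarrow> real^'n \<Rightarrow> real^'n \<Rightarrow> real" where
  "br G x y = (\<Sum>i\<in>UNIV. \<Sum>j\<in>UNIV. x$i * real_of_int (G$i$j) * y$j)"

definition emb :: "int^'n \<Rightarrow> real^'n" where
  "emb x = (\<chi> i. real_of_int (x$i))"

definition even_lattice :: "int^'n^'n \<Rightarrow> bool" where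
  "even_lattice G \<longleftrightarrow> (\<forall>i j. G$i$j = G$j$i) \<and> (\<forall>i. even (G$i$i))"

text \<open>Hyperbolic: nondegenerate of signature (1, rank-1).\<close>
definition hyperbolic :: "int^'n^'n \<Rightarrow> bool" where
  "hyperbolic G \<longleftrightarrow> (\<exists>x. br G x x > 0) \<and>
     (\<forall>x y. br G x x > 0 \<and> br G x y = 0 \<and> y \<noteq> 0 \<longrightarrow> br G y y < 0)"

definition polarized :: "int^'n^'n \<Rightarrow> int^'n \<Rightarrow> bool" where
  "polarized G h \<longleftrightarrow> even_lattice G \<and> hyperbolic G \<and> bi G h h > 0"

definition root :: "int^'n^'n \<Rightarrow> int^'n \<Rightarrow> int \<Rightarrow> (int^'n) set" where
  "root G h n = {r. bi G r r = -2 \<and> bi G r h = n}"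

text \<open>Weyl chamber for rt(S,h): a connected component of the complement, in rt(S,h) tensor R,
  of the hyperplanes orthogonal to the roots in root_0(S,h).\<close>
definition weyl_chamber :: "int^'n^'n \<Rightarrow> int^'n \<Rightarrow> (real^'n) set \<Rightarrow> bool" where
  "weyl_chamber G h D \<longleftrightarrow>
     (let U = span (emb ` root G h 0) - (\<Union>r\<in>root G h 0. {x. br G x (emb r) = 0})
      in \<exists>x\<in>U. D = connected_component_set U x)"

definition pos_roots :: "int^'n^'n \<Rightarrow> int^'n \<Rightarrow> (real^'n) set \<Rightarrow> (int^'n) set" where
  "pos_roots G h D = {r\<in>root G h 0. \<forall>x\<in>D. br G x (emb r) > 0}"

definition simple_roots :: "int^'n^'n \<Rightarrow> int^'n \<Rightarrow> (real^'n) set \<Rightarrow> (int^'n) set" where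
  "simple_roots G h D = {r\<in>pos_roots G h D.
     \<not> (\<exists>a\<in>pos_roots G h D. \<exists>b\<in>pos_roots G h D. r = a + b)}"

definition Pbar :: "int^'n^'n \<Rightarrow> int^'n \<Rightarrow> (real^'n) set \<Rightarrow> (real^'n) set" where
  "Pbar G h D = {v. br G v v \<ge> 0 \<and> br G v (emb h) \<ge> 0 \<and>
     (\<forall>r\<in>pos_roots G h D. br G v (emb r) \<ge> 0) \<and>
     (\<forall>r. bi G r r = -2 \<and> bi G r h > 0 \<longrightarrow> br G v (emb r) \<ge> 0)}"

definition lines :: "int^'n^'n \<Rightarrow> int^'n \<Rightarrow> (real^'n) set \<Rightarrow> (int^'n) set" where
  "lines G h D = {l\<in>root G h 1. \<forall>e\<in>simple_roots G h D. bi G l e \<ge> 0}"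

definition isotropic :: "int^'n^'n \<Rightarrow> int^'n \<Rightarrow> int \<Rightarrow> int^'n \<Rightarrow> bool" where
  "isotropic G h m w \<longleftrightarrow> bi G w w = 0 \<and> bi G w h = m"

definition admissible :: "int^'n^'n \<Rightarrow> int^'n \<Rightarrow> int \<Rightarrow> bool" where
  "admissible G h k \<longleftrightarrow> (k \<ge> 2 \<longrightarrow> bi G h h \<ge> 4) \<and>
     (\<forall>j\<in>{1..k}. \<not> (\<exists>w. isotropic G h j w))"

end

theory Submission
  imports Defs
begin

text \<open>Everything rests on the Hodge index inequality \<open>h\<^sup>2 x\<^sup>2 \<le> (x\<cdot>h)\<^sup>2\<close> and its
  equality case \<open>h\<^sup>2 x = (x\<cdot>h) h\<close>. If \<open>w \<noteq> w'\<close> are \<open>m\<close>-isotropic vectors of the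
  fundamental polyhedron, then \<open>w - w'\<close> is orthogonal to \<open>h\<close>, hence negative, so
  \<open>k = w\<cdot>w' > 0\<close>; \<open>k = 1\<close> would make \<open>\<plusminus>(w - w')\<close> a positive root of \<open>rt(S,h)\<close> pairing
  negatively with \<open>w\<close> or \<open>w'\<close>. So \<open>k \<ge> 2\<close>, and the Hodge inequality for \<open>w + w'\<close> leaves
  only \<open>w + w' = h\<close> (when \<open>h\<^sup>2 = 4\<close>, \<open>m = 2\<close>) or produces the 2-isotropic vector
  \<open>h - w - w'\<close> (when \<open>h\<^sup>2 = 8\<close>, \<open>m = 3\<close>). Likewise a line or an exceptional divisor \<open>x\<close>
  with \<open>x\<cdot>w \<ge> 2\<close> makes \<open>w + x\<close> violate the Hodge inequality, except in two borderline
  cases: for \<open>m = 2\<close> the vector \<open>h - w - x\<close> is 1-isotropic, and for \<open>m = 3\<close> the equality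
  case gives \<open>2(w + x) = h\<close>, contradicting \<open>w\<cdot>h = 3\<close>.\<close>

lemma bi_add_left: "bi G (x + y) z = bi G x z + bi G y z"
  by (simp add: bi_def ring_distribs sum.distrib)

lemma bi_add_right: "bi G z (x + y) = bi G z x + bi G z y"
  by (simp add: bi_def ring_distribs sum.distrib)

lemma bi_diff_left: "bi G (x - y) z = bi G x z - bi G y z"
  by (simp add: bi_def ring_distribs sum_subtractf)

lemma bi_diff_right: "bi G z (x - y) = bi G z x - bi G z y"
  by (simp add: bi_def ring_distribs sum_subtractf)

lemma bi_minus_left: "bi G (- x) z = - bi G x z"
  by (simp add: bi_def sum_negf)

lemma bi_minus_right: "bi G z (- x) = - bi G z x"
  by (simp add: bi_def sum_negf)

lemma bi_smult_left: "bi G (c *s x) z = c * bi G x z"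
  by (simp add: bi_def sum_distrib_left mult_ac)

lemma bi_smult_right: "bi G z (c *s x) = c * bi G z x"
  by (simp add: bi_def sum_distrib_left mult_ac)

lemmas bi_linear = bi_add_left bi_add_right bi_diff_left bi_diff_right
  bi_minus_left bi_minus_right bi_smult_left bi_smult_right

lemma bi_commute:
  assumes "even_lattice G"
  shows "bi G x y = bi G y x"
proof -
  have sym: "G$i$j = G$j$i" for i j
    using assms by (simp add: even_lattice_def)
  have "bi G y x = (\<Sum>j\<in>UNIV. \<Sum>i\<in>UNIV. y$i * G$i$j * x$j)"
    unfolding bi_def by (rule sum.swap)
  also have "\<dots> = bi G x y"
    unfolding bi_def by (intro sum.cong refl) (simp add: sym mult_ac)
  finally show ?thesis by simp
qed

lemma br_emb_emb: "br G (emb x) (emb y) = of_int (bi G x y)"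
  by (simp add: br_def bi_def emb_def)

lemma emb_eq_0_iff: "emb x = 0 \<longleftrightarrow> x = 0"
  by (simp add: emb_def vec_eq_iff)

lemma emb_uminus: "emb (- x) = - emb x"
  by (simp add: emb_def vec_eq_iff)

lemma br_minus_right: "br G z (- x) = - br G z x"
  by (simp add: br_def sum_negf)

lemma hyperbolic_orthogonal_negative:
  assumes "hyperbolic G" "bi G x x > 0" "bi G x y = 0" "y \<noteq> 0"
  shows "bi G y y < 0"
proof -
  have "br G (emb y) (emb y) < 0"
    using assms unfolding hyperbolic_def by (metis br_emb_emb emb_eq_0_iff of_int_0 of_int_pos)
  then show ?thesis
    by (simp add: br_emb_emb)
qed

lemma hodge_index:
  assumes "polarized G h"
  shows "bi G h h * bi G x x < (bi G x h)\<^sup>2 \<or> bi G h h *s x = bi G x h *s h"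
proof (rule disjCI)
  have ev: "even_lattice G" and hy: "hyperbolic G" and pos: "bi G h h > 0"
    using assms by (auto simp: polarized_def)
  define y where "y = bi G h h *s x - bi G x h *s h"
    \<comment> \<open>\<open>h\<^sup>2\<close> times the component of \<open>x\<close> orthogonal to \<open>h\<close>\<close>
  assume "bi G h h *s x \<noteq> bi G x h *s h"
  then have "y \<noteq> 0"
    by (simp add: y_def)
  moreover have "bi G h y = 0"
    unfolding y_def using bi_commute[OF ev, of h x] by (simp add: bi_linear)
  ultimately have "bi G y y < 0"
    using hyperbolic_orthogonal_negative[OF hy pos] by blast
  moreover have "bi G y y = bi G h h * (bi G h h * bi G x x - (bi G x h)\<^sup>2)"
    unfolding y_def using bi_commute[OF ev, of h x]
    by (simp add: bi_linear power2_eq_square algebra_simps)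
  ultimately show "bi G h h * bi G x x < (bi G x h)\<^sup>2"
    using pos by (simp add: mult_less_0_iff)
qed

lemma hodge_index_le:
  assumes "polarized G h"
  shows "bi G h h * bi G x x \<le> (bi G x h)\<^sup>2"
  using hodge_index[OF assms, of x]
proof
  assume eq: "bi G h h *s x = bi G x h *s h"
  have "bi G (bi G h h *s x) x = bi G (bi G x h *s h) x"
    by (simp add: eq)
  then show ?thesis
    using assms bi_commute[of G h x] by (simp add: polarized_def bi_linear power2_eq_square)
qed simp

lemma hodge_index_eq:
  assumes "polarized G h" "bi G h h * bi G x x = (bi G x h)\<^sup>2"
  shows "bi G h h *s x = bi G x h *s h"
  using hodge_index[OF assms(1), of x] assms(2) by simp

lemma connected_nonvanishing_sign_cases:
  fixes f :: "'a::topological_space \<Rightarrow> real"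
  assumes "connected S" "continuous_on S f" "\<And>x. x \<in> S \<Longrightarrow> f x \<noteq> 0"
  shows "(\<forall>x\<in>S. f x > 0) \<or> (\<forall>x\<in>S. f x < 0)"
proof (rule ccontr)
  assume "\<not> ?thesis"
  then obtain a b where "a \<in> S" "b \<in> S" "f a < 0" "f b > 0"
    using assms(3) by (meson linorder_neqE_linordered_idom)
  moreover have "connected (f ` S)"
    using connected_continuous_image[OF assms(2,1)] .
  ultimately have "0 \<in> f ` S"
    using connected_contains_Icc[of "f ` S" "f a" "f b"] by fastforce
  then show False
    using assms(3) by auto
qed

lemma weyl_chamber_pos_roots_cases:
  assumes "weyl_chamber G h D" "r \<in> root G h 0"
  shows "r \<in> pos_roots G h D \<or> - r \<in> pos_roots G h D"
proof -
  define U where "U = span (emb ` root G h 0) - (\<Union>r\<in>root G h 0. {x. br G x (emb r) = 0})"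
  obtain x where "D = connected_component_set U x"
    using assms(1) unfolding weyl_chamber_def U_def[symmetric] Let_def by blast
  then have "connected D" and "D \<subseteq> U"
    using connected_component_subset by auto
  then have "(\<forall>y\<in>D. br G y (emb r) > 0) \<or> (\<forall>y\<in>D. br G y (emb r) < 0)"
    using assms(2) unfolding U_def br_def
    by (intro connected_nonvanishing_sign_cases continuous_intros) auto
  moreover have "- r \<in> root G h 0"
    using assms(2) by (simp add: root_def bi_linear)
  ultimately show ?thesis
    using assms(2) by (auto simp: pos_roots_def emb_uminus br_minus_right)
qed

lemma Pbar_pos_roots_nonneg:
  "emb v \<in> Pbar G h D \<Longrightarrow> r \<in> pos_roots G h D \<Longrightarrow> bi G v r \<ge> 0"
  by (simp add: Pbar_def br_emb_emb)

lemma Pbar_roots_nonneg: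
  "emb v \<in> Pbar G h D \<Longrightarrow> bi G r r = -2 \<Longrightarrow> bi G r h > 0 \<Longrightarrow> bi G v r \<ge> 0"
  by (simp add: Pbar_def br_emb_emb)

lemma Pbar_lines_nonneg:
  assumes "even_lattice G" "emb v \<in> Pbar G h D" "l \<in> lines G h D"
  shows "bi G l v \<ge> 0"
  using assms Pbar_roots_nonneg[of v G h D l] bi_commute[of G l v]
  by (simp add: lines_def root_def)

lemma Pbar_simple_roots_nonneg:
  assumes "even_lattice G" "emb v \<in> Pbar G h D" "e \<in> simple_roots G h D"
  shows "bi G e v \<ge> 0"
  using assms Pbar_pos_roots_nonneg[of v G h D e] bi_commute[of G e v]
  by (simp add: simple_roots_def)

lemma Pbar_isotropic_inner_ge_2:
  assumes "polarized G h" "weyl_chamber G h D"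
    and "isotropic G h m w" "emb w \<in> Pbar G h D"
    and "isotropic G h m w'" "emb w' \<in> Pbar G h D" "w \<noteq> w'"
  shows "bi G w w' \<ge> 2"
proof -
  have ev: "even_lattice G" and hy: "hyperbolic G" and pos: "bi G h h > 0"
    using assms(1) by (auto simp: polarized_def)
  have iso: "bi G w w = 0" "bi G w' w' = 0" "bi G w h = m" "bi G w' h = m"
    using assms(3,5) by (auto simp: isotropic_def)
  have sym: "bi G w' w = bi G w w'"
    using bi_commute[OF ev] .
  have "bi G h (w - w') = 0"
    using iso bi_commute[OF ev, of h] by (simp add: bi_linear)
  then have "bi G (w - w') (w - w') < 0"
    using hyperbolic_orthogonal_negative[OF hy pos] assms(7) by simp
  then have "bi G w w' > 0"
    using iso sym by (simp add: bi_linear)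
  moreover have "bi G w w' \<noteq> 1"
  proof
    assume one: "bi G w w' = 1"
    then have "w - w' \<in> root G h 0"
      using iso sym by (simp add: root_def bi_linear)
    from weyl_chamber_pos_roots_cases[OF assms(2) this] show False
    proof
      assume "w - w' \<in> pos_roots G h D"
      from Pbar_pos_roots_nonneg[OF assms(4) this] show False
        using one iso by (simp add: bi_linear)
    next
      assume "- (w - w') \<in> pos_roots G h D"
      from Pbar_pos_roots_nonneg[OF assms(6) this] show False
        using one iso sym by (simp add: bi_linear)
    qed
  qed
  ultimately show ?thesis
    by linarith
qed

lemma isotropic_2_pair_eq:
  assumes "polarized G h" "bi G h h \<ge> 4"
    and "isotropic G h 2 w" "isotropic G h 2 w'" "bi G w w' \<ge> 2"
  shows "bi G h h = 4 \<and> w + w' = h"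
proof -
  define x where "x = w + w'"
  have sym: "bi G w' w = bi G w w'"
    using assms(1) bi_commute[of G w' w] by (simp add: polarized_def)
  have sq: "bi G x x = 2 * bi G w w'" and lin: "bi G x h = 4"
    using assms(3,4) sym by (simp_all add: x_def isotropic_def bi_linear)
  have hodge: "bi G h h * bi G w w' \<le> 8"
    using hodge_index_le[OF assms(1), of x] sq lin by simp
  moreover have "4 * bi G w w' \<le> bi G h h * bi G w w'"
    using assms(2,5) by (intro mult_right_mono) auto
  ultimately have "bi G w w' = 2"
    using assms(5) by linarith
  with hodge assms(2) have "bi G h h = 4"
    by simp
  with \<open>bi G w w' = 2\<close> have "4 *s x = 4 *s h"
    using hodge_index_eq[OF assms(1), of x] sq lin by (simp add: power2_eq_square)
  then have "x = h"
    by (simp add: vec_eq_iff)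
  with \<open>bi G h h = 4\<close> show ?thesis
    by (simp add: x_def)
qed

lemma isotropic_3_pair_complement:
  assumes "polarized G h" "bi G h h = 8"
    and "isotropic G h 3 w" "isotropic G h 3 w'" "bi G w w' \<ge> 2"
  shows "isotropic G h 2 (h - (w + w'))"
proof -
  have iso: "bi G w w = 0" "bi G w' w' = 0" "bi G w h = 3" "bi G w' h = 3"
    using assms(3,4) by (auto simp: isotropic_def)
  have ev: "even_lattice G"
    using assms(1) by (simp add: polarized_def)
  have sq: "bi G (w + w') (w + w') = 2 * bi G w w'" and lin: "bi G (w + w') h = 6"
    using iso bi_commute[OF ev, of w' w] by (simp_all add: bi_linear)
  then have "bi G w w' = 2"
    using hodge_index_le[OF assms(1), of "w + w'"] assms(2,5) by simp
  then show ?thesis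
    using sq lin assms(2) bi_commute[OF ev, of h "w + w'"] by (simp add: isotropic_def bi_linear)
qed

lemma root0_inner_isotropic_le_1:
  assumes "polarized G h" "m\<^sup>2 < 2 * bi G h h"
    and "e \<in> root G h 0" "isotropic G h m w"
  shows "bi G e w \<le> 1"
proof (rule ccontr)
  assume "\<not> bi G e w \<le> 1"
  moreover have "bi G (w + e) (w + e) = 2 * bi G e w - 2" "bi G (w + e) h = m"
    using assms(1,3,4) bi_commute[of G w e]
    by (auto simp: polarized_def isotropic_def root_def bi_linear)
  ultimately have "2 * bi G h h \<le> bi G h h * bi G (w + e) (w + e)"
    using assms(1) by (simp add: polarized_def)
  then show False
    using hodge_index_le[OF assms(1), of "w + e"] assms(2) \<open>bi G (w + e) h = m\<close> by simp
qed

lemma root1_inner_isotropic_3_le_1: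
  assumes "polarized G h" "bi G h h = 8"
    and "l \<in> root G h 1" "isotropic G h 3 w"
  shows "bi G l w \<le> 1"
proof (rule ccontr)
  assume "\<not> bi G l w \<le> 1"
  have ev: "even_lattice G"
    using assms(1) by (simp add: polarized_def)
  define u where "u = w + l"
  have iso: "bi G w w = 0" "bi G w h = 3"
    using assms(4) by (auto simp: isotropic_def)
  have sq: "bi G u u = 2 * bi G l w - 2" and lin: "bi G u h = 4"
    using assms(3) iso bi_commute[OF ev, of w l] by (auto simp: u_def root_def bi_linear)
  from \<open>\<not> bi G l w \<le> 1\<close> have "bi G l w = 2"
    using hodge_index_le[OF assms(1), of u] sq lin assms(2) by simp
  then have "8 *s u = 4 *s h"
    using hodge_index_eq[OF assms(1), of u] sq lin assms(2) by simp
  then have "bi G (8 *s u) w = bi G (4 *s h) w"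
    by simp
  then show False
    using iso \<open>bi G l w = 2\<close> bi_commute[OF ev, of h w] bi_commute[OF ev, of w l]
    by (simp add: u_def bi_linear)
qed

lemma root1_inner_isotropic_2_complement:
  assumes "polarized G h" "bi G h h \<ge> 4"
    and "l \<in> root G h 1" "isotropic G h 2 w" "bi G l w \<ge> 2"
  shows "isotropic G h 1 (h - (w + l))"
proof -
  have ev: "even_lattice G"
    using assms(1) by (simp add: polarized_def)
  define u where "u = w + l"
  have sq: "bi G u u = 2 * bi G l w - 2" and lin: "bi G u h = 3"
    using assms(3,4) bi_commute[OF ev, of w l]
    by (auto simp: u_def root_def isotropic_def bi_linear)
  have hodge: "bi G h h * (2 * bi G l w - 2) \<le> 9"
    using hodge_index_le[OF assms(1), of u] sq lin by simp
  moreover have "4 * (2 * bi G l w - 2) \<le> bi G h h * (2 * bi G l w - 2)"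
    using assms(2,5) by (intro mult_right_mono) auto
  ultimately have "4 * (2 * bi G l w - 2) \<le> 9"
    by linarith
  then have "bi G l w = 2"
    using assms(5) by presburger
  with hodge assms(2) have "bi G h h = 4"
    by simp
  with \<open>bi G l w = 2\<close> show ?thesis
    using sq lin bi_commute[OF ev, of h u] by (simp add: u_def isotropic_def bi_linear)
qed

lemma Pbar_isotropic_eq_or_complement:
  assumes "polarized G h" "weyl_chamber G h D" "m \<in> {2, 3}"
    and "m = 2 \<Longrightarrow> bi G h h \<ge> 4" "m = 3 \<Longrightarrow> bi G h h = 8 \<and> (\<nexists>v. isotropic G h 2 v)"
    and "isotropic G h m w" "emb w \<in> Pbar G h D"
    and "isotropic G h m w'" "emb w' \<in> Pbar G h D"
  shows "w' = w \<or> bi G h h = 4 \<and> m = 2 \<and> w + w' = h"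
proof (cases "w' = w")
  case False
  then have "bi G w w' \<ge> 2"
    using Pbar_isotropic_inner_ge_2[OF assms(1,2,6-9)] by simp
  then show ?thesis
    using assms(3-6,8) isotropic_2_pair_eq[OF assms(1)] isotropic_3_pair_complement[OF assms(1)]
    by blast
qed simp

lemma Pbar_lines_inner_isotropic:
  assumes "polarized G h" "m \<in> {2, 3}"
    and "m = 2 \<Longrightarrow> bi G h h \<ge> 4" "m = 3 \<Longrightarrow> bi G h h = 8" "\<nexists>v. isotropic G h 1 v"
    and "isotropic G h m w" "emb w \<in> Pbar G h D" "l \<in> lines G h D"
  shows "bi G l w \<in> {0, 1}"
proof -
  have l: "l \<in> root G h 1"
    using assms(8) by (simp add: lines_def)
  have "bi G l w \<le> 1"
  proof (cases "m = 2")
    case True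
    then show ?thesis
      using root1_inner_isotropic_2_complement[OF assms(1) _ l] assms(3,5,6) by force
  next
    case False
    then show ?thesis
      using root1_inner_isotropic_3_le_1[OF assms(1) _ l] assms(2,4,6) by auto
  qed
  moreover have "bi G l w \<ge> 0"
    using assms(1) Pbar_lines_nonneg[OF _ assms(7,8)] by (simp add: polarized_def)
  ultimately show ?thesis
    by auto
qed

lemma Pbar_simple_roots_inner_isotropic:
  assumes "polarized G h" "m\<^sup>2 < 2 * bi G h h"
    and "isotropic G h m w" "emb w \<in> Pbar G h D" "e \<in> simple_roots G h D"
  shows "bi G e w \<in> {0, 1}"
proof -
  have "e \<in> root G h 0"
    using assms(5) by (simp add: simple_roots_def pos_roots_def)
  then have "bi G e w \<le> 1"
    using root0_inner_isotropic_le_1[OF assms(1,2) _ assms(3)] by blast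
  moreover have "bi G e w \<ge> 0"
    using assms(1) Pbar_simple_roots_nonneg[OF _ assms(4,5)] by (simp add: polarized_def)
  ultimately show ?thesis
    by auto
qed

theorem lemma2p15:
  fixes G :: "int^'n^'n" and h w :: "int^'n" and D :: "(real^'n) set" and m :: int
  assumes "m \<in> {2, 3}"
    and "polarized G h"
    and "m = 2 \<Longrightarrow> bi G h h \<ge> 4"
    and "m = 3 \<Longrightarrow> bi G h h = 8"
    and "admissible G h (m - 1)"
    and "weyl_chamber G h D"
    and "isotropic G h m w" and "emb w \<in> Pbar G h D"
  shows "(if bi G h h = 4 \<and> m = 2 then
            finite {v. isotropic G h 2 v \<and> emb v \<in> Pbar G h D} \<and>
            card {v. isotropic G h 2 v \<and> emb v \<in> Pbar G h D} \<le> 2 \<and>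
            (\<forall>w'. isotropic G h 2 w' \<and> emb w' \<in> Pbar G h D \<and> w' \<noteq> w \<longrightarrow> w + w' = h)
          else (\<forall>w'. isotropic G h m w' \<and> emb w' \<in> Pbar G h D \<longrightarrow> w' = w))
       \<and> (\<forall>l\<in>lines G h D. bi G l w \<in> {0, 1})
       \<and> (\<forall>e\<in>simple_roots G h D. bi G e w \<in> {0, 1})"
proof -
  have no_iso: "\<nexists>v. isotropic G h 1 v" "m = 3 \<Longrightarrow> \<nexists>v. isotropic G h 2 v"
    using assms(1,5) by (auto simp: admissible_def)
  have pair: "w' = w \<or> bi G h h = 4 \<and> m = 2 \<and> w + w' = h"
    if "isotropic G h m w'" "emb w' \<in> Pbar G h D" for w'
    using Pbar_isotropic_eq_or_complement[OF assms(2,6,1,3) _ assms(7,8) that] assms(4) no_iso(2)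
    by blast
  let ?S = "{v. isotropic G h 2 v \<and> emb v \<in> Pbar G h D}"
  have "finite ?S \<and> card ?S \<le> 2" if "m = 2"
  proof -
    have "?S \<subseteq> {w, h - w}"
      using pair that by (force simp: algebra_simps)
    moreover have "card {w, h - w} \<le> 2"
      by (simp add: card_insert_if)
    ultimately show ?thesis
      by (meson card_mono finite.emptyI finite.insertI finite_subset order_trans)
  qed
  moreover have "m\<^sup>2 < 2 * bi G h h"
    using assms(1,3,4) by auto
  ultimately show ?thesis
    using pair Pbar_lines_inner_isotropic[OF assms(2,1,3,4) no_iso(1) assms(7,8)]
      Pbar_simple_roots_inner_isotropic[OF assms(2) _ assms(7,8)]
    by auto
qed

end
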